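(* Let $K$ be a field, $A=\{\alpha_1,\dots,\alpha_m\}\subset K$ and $B=\{\beta_1,\dots,\beta_n\}\subset K$ finite sets with $|A|=m$, $|B|=n$, and let $f=\prod_{i=1}^m(x-\alpha_i)=\sum_{i=0}^m f_ix^i$ (so $f_m=1$) and $g=\prod_{j=1}^n(x-\beta_j)=\sum_{i=0}^n g_ix^i$ (so $g_n=1$), with the convention $f_i=0$ for $i<0$ or $i>m$ and $g_i=0$ for $i<0$ or $i>n$. Let $0\le d\le \min\{n-1,m\}$ and let $X=(x_1,\dots,x_{n-d})$ be indeterminates. Let $M$ be the $(m+n-2d)\times(m+n-2d)$ matrix whose rows are indexed by the $n-d$ pairs $(f,j)$, $j=n-d-1,n-d-2,\dots,0$ (in this order), followed by the $m-d$ pairs $(g,j)$, $j=m-d-1,\dots,0$ (in this order), defined as follows: for $c=1,\dots,m-d$, the entry of row $(f,j)$ in column $c$ is the coefficient of $x^{m+n-d-c}$ in $x^jf(x)$, and the entry of row $(g,j)$ in column $c$ is the coefficient of $x^{m+n-d-c}$ in $x^jg(x)$; for $\ell=1,\dots,n-d$, the entry of row $(f,j)$ in column $m-d+\ell$ is $x_\ell^jf(x_\ell)$ and the entry of row $(g,j)$ in column $m-d+\ell$ is $x_\ell^jg(x_\ell)$. Then $$\operatorname{MSyl}_{0,d}(A,B)(X)=\frac{\det M}{\det V(X)}.$$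
   Context: For finite sets $Y,Z$, $\mathcal{R}(Y,Z):=\prod_{y\in Y,z\in Z}(y-z)$, with $\mathcal{R}(Y,Z)=1$ if $Y$ or $Z$ is empty. For $0\le d\le n-1$ and $X=(x_1,\dots,x_{n-d})$, $$\operatorname{MSyl}_{0,d}(A,B)(X):=(-1)^{(m-d)(n-d)}\sum_{B'\subset B,\ |B'|=d}\Big(\prod_{\beta\in B\setminus B'}f(\beta)\Big)\frac{\mathcal{R}(X,B')}{\mathcal{R}(B\setminus B',B')},$$ where $X$ is regarded as the set $\{x_1,\dots,x_{n-d}\}$. $V(X)$ is the $(n-d)\times(n-d)$ Vandermonde matrix whose $\ell$-th column is $(x_\ell^{n-d-1},\dots,x_\ell,1)^T$, so $\det V(X)=\prod_{1\le i<j\le n-d}(x_i-x_j)$. *)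

theory Defs
  imports "HOL-Computational_Algebra.Polynomial" "Jordan_Normal_Form.Determinant"
begin

definition Res :: "'a::comm_ring_1 set \<Rightarrow> 'a set \<Rightarrow> 'a" where
  "Res Y Z = (\<Prod>y\<in>Y. \<Prod>z\<in>Z. y - z)"

definition root_poly :: "'a::comm_ring_1 set \<Rightarrow> 'a poly" where
  "root_poly A = (\<Prod>a\<in>A. [:-a, 1:])"

(* MSyl_{0,d}(A,B)(X), X = {x_0,...,x_{n-d-1}} (0-based indexing of x) *)
definition MSyl0 :: "'a::field set \<Rightarrow> 'a set \<Rightarrow> nat \<Rightarrow> (nat \<Rightarrow> 'a) \<Rightarrow> 'a" where
  "MSyl0 A B d x =
     (let m = card A; n = card B; X = x ` {..<n-d} in
      (-1) ^ ((m-d)*(n-d)) *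
      (\<Sum>B'\<in>{B'. B' \<subseteq> B \<and> card B' = d}.
          (\<Prod>\<beta>\<in>B - B'. poly (root_poly A) \<beta>) * Res X B' / Res (B - B') B'))"

definition vandermonde :: "nat \<Rightarrow> (nat \<Rightarrow> 'a::comm_ring_1) \<Rightarrow> 'a mat" where
  "vandermonde k x = mat k k (\<lambda>(i, l). x l ^ (k - 1 - i))"

(* The matrix M of size (m+n-2d), 0-based rows and columns.
   Row i < n-d is (f, j) with j = n-d-1-i; row n-d+i' is (g, j) with j = m-d-1-i'.
   Column c' < m-d corresponds to c = c'+1: coefficient of x^(m+n-d-c) in x^j p(x).
   Column m-d+l' corresponds to l = l'+1 (variable x l'): x_l^j p(x_l). *)
definition MSyl_matrix :: "'a::field set \<Rightarrow> 'a set \<Rightarrow> nat \<Rightarrow> (nat \<Rightarrow> 'a) \<Rightarrow> 'a mat" where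
  "MSyl_matrix A B d x =
     (let m = card A; n = card B; f = root_poly A; g = root_poly B;
          entry = (\<lambda>p j c. if c < m - d
                          then coeff (monom 1 j * p) (m + n - d - (c + 1))
                          else x (c - (m - d)) ^ j * poly p (x (c - (m - d)))) in
      mat (m + n - 2*d) (m + n - 2*d)
        (\<lambda>(i, c). if i < n - d then entry f (n - d - 1 - i) c
                   else entry g (m - d - 1 - (i - (n - d))) c))"

end

theory Submission
  imports Defs
begin

(* Write each f-row polynomial x^j f as q g + R with deg q < m - d and deg R < n. Its row in M is
   the combination, with the coefficients of q, of the g-rows plus the row of R, and R has no
   coefficients in the first m - d columns; so M factors through a unitriangular matrix and
   det M = (-1)^((m-d)(n-d)) det (R_j(x_l)).  Lagrange interpolation on B gives
   R_j(x_l) = sum over beta in B of beta^j f(beta) L_beta(x_l).  Expanding this determinant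
   multilinearly over injections into B and grouping them by their image S = B - B', the
   factorisation L^B_beta(t) = prod_(b in B') (t - b)/(beta - b) * L^S_beta(t) turns each group
   into det V(X) times the summand of MSyl for B'. *)

definition lagrange_basis :: "'a::field set \<Rightarrow> 'a \<Rightarrow> 'a \<Rightarrow> 'a" where
  "lagrange_basis P a t = (\<Prod>c\<in>P - {a}. (t - c) / (a - c))"

lemma lagrange_basis_self: "lagrange_basis P a a = 1"
  unfolding lagrange_basis_def by (rule prod.neutral) auto

lemma lagrange_basis_other: "finite P \<Longrightarrow> b \<in> P \<Longrightarrow> a \<noteq> b \<Longrightarrow> lagrange_basis P a b = 0"
  unfolding lagrange_basis_def by (rule prod_zero) auto

lemma poly_lagrange_interpolation:
  fixes p :: "'a::field poly"
  assumes P: "finite P" and deg: "degree p < card P"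
  shows "poly p t = (\<Sum>a\<in>P. poly p a * lagrange_basis P a t)"
proof -
  define q where
    "q = (\<Sum>a\<in>P. smult (poly p a / (\<Prod>c\<in>P - {a}. a - c)) (\<Prod>c\<in>P - {a}. [:-c, 1:]))"
  have poly_q: "poly q t = (\<Sum>a\<in>P. poly p a * lagrange_basis P a t)" for t
    unfolding q_def poly_sum lagrange_basis_def
    by (simp add: poly_prod prod_dividef)
  have "degree q \<le> card P - 1"
    unfolding q_def
  proof (rule degree_sum_le[OF P])
    fix a assume "a \<in> P"
    have "degree (\<Prod>c\<in>P - {a}. [:-c, 1:]) \<le> card (P - {a})"
      using degree_prod_sum_le[of "P - {a}" "\<lambda>c. [:-c, 1:]"] P by simp
    with \<open>a \<in> P\<close> P show "degree (smult (poly p a / (\<Prod>c\<in>P - {a}. a - c)) (\<Prod>c\<in>P - {a}. [:-c, 1:]))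
        \<le> card P - 1"
      by (simp add: order_trans[OF degree_smult_le])
  qed
  with deg have "degree q < card P" by linarith
  have "p = q"
  proof (rule poly_eqI_degree[OF _ deg \<open>degree q < card P\<close>])
    fix b assume "b \<in> P"
    have "poly q b = (\<Sum>a\<in>P. poly p a * lagrange_basis P a b)" by (rule poly_q)
    also have "\<dots> = poly p b * lagrange_basis P b b + (\<Sum>a\<in>P - {b}. poly p a * lagrange_basis P a b)"
      by (rule sum.remove[OF P \<open>b \<in> P\<close>])
    also have "(\<Sum>a\<in>P - {b}. poly p a * lagrange_basis P a b) = 0"
    proof (rule sum.neutral, rule ballI)
      fix a assume "a \<in> P - {b}"
      then show "poly p a * lagrange_basis P a b = 0"
        using lagrange_basis_other[OF P \<open>b \<in> P\<close>, of a] by simp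
    qed
    finally show "poly p b = poly q b" by (simp add: lagrange_basis_self)
  qed
  show ?thesis using poly_q[of t, folded \<open>p = q\<close>] .
qed

lemma lagrange_basis_subset:
  assumes "finite P" and "S \<subseteq> P" and "a \<in> S"
  shows "lagrange_basis P a t = (\<Prod>c\<in>P - S. t - c) / (\<Prod>c\<in>P - S. a - c) * lagrange_basis S a t"
proof -
  have "P - {a} = (P - S) \<union> (S - {a})" and "(P - S) \<inter> (S - {a}) = {}"
    using assms by auto
  then have "lagrange_basis P a t = (\<Prod>c\<in>P - S. (t - c) / (a - c)) * lagrange_basis S a t"
    unfolding lagrange_basis_def using assms
    by (simp add: prod.union_disjoint finite_subset)
  then show ?thesis by (simp add: prod_dividef)
qed

definition injections :: "nat \<Rightarrow> 'b set \<Rightarrow> (nat \<Rightarrow> 'b) set" where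
  "injections k I = {\<phi> \<in> {..<k} \<rightarrow>\<^sub>E I. inj_on \<phi> {..<k}}"

lemma finite_injections: "finite I \<Longrightarrow> finite (injections k I)"
  unfolding injections_def by (rule finite_subset[of _ "{..<k} \<rightarrow>\<^sub>E I"]) (auto intro: finite_PiE)

lemma injections_bij_betw:
  assumes "\<phi> \<in> injections k S" and "finite S" and "card S = k"
  shows "bij_betw \<phi> {..<k} S"
proof -
  have "inj_on \<phi> {..<k}" and "\<phi> ` {..<k} \<subseteq> S"
    using assms(1) unfolding injections_def by auto
  moreover from \<open>inj_on \<phi> {..<k}\<close> have "card (\<phi> ` {..<k}) = card S"
    by (simp add: card_image assms(3))
  ultimately show ?thesis
    using assms(2) by (simp add: bij_betw_def card_subset_eq)
qed

lemma injections_with_image: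
  assumes "S \<subseteq> I" and "finite S" and "card S = k"
  shows "{\<phi> \<in> injections k I. \<phi> ` {..<k} = S} = injections k S"
  using assms injections_bij_betw[OF _ assms(2,3)]
  unfolding injections_def bij_betw_def by fastforce

lemma det_mat_transpose: "det (mat n n (\<lambda>(i, j). f j i)) = det (mat n n (\<lambda>(i, j). f i j))"
proof -
  have "mat n n (\<lambda>(i, j). f j i) = transpose_mat (mat n n (\<lambda>(i, j). f i j))"
    by (rule eq_matI) auto
  then show ?thesis by (simp add: det_transpose[of _ n])
qed

lemma cauchy_binet_injections:
  fixes u w :: "'b \<Rightarrow> nat \<Rightarrow> 'a::comm_ring_1"
  assumes "finite I"
  shows "det (mat k k (\<lambda>(i, l). \<Sum>b\<in>I. u b i * w b l)) =
    (\<Sum>\<phi>\<in>injections k I. det (mat k k (\<lambda>(i, l). u (\<phi> l) i)) * (\<Prod>l<k. w (\<phi> l) l))"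
proof -
  let ?U = "\<lambda>\<phi>. mat k k (\<lambda>(l, i). u (\<phi> l) i)"
  let ?perms = "{p. p permutes {..<k}}"
  have det_U: "det (?U \<phi>) = det (mat k k (\<lambda>(i, l). u (\<phi> l) i))" for \<phi>
    by (rule det_mat_transpose)
  have "det (mat k k (\<lambda>(i, l). \<Sum>b\<in>I. u b i * w b l)) = det (mat k k (\<lambda>(l, i). \<Sum>b\<in>I. w b l * u b i))"
    by (subst det_mat_transpose[symmetric]) (simp add: mult.commute)
  also have "\<dots> = (\<Sum>p\<in>?perms. signof p * (\<Prod>l<k. \<Sum>b\<in>I. w b l * u b (p l)))"
    by (subst det_def'[of _ k]) (auto simp: atLeast0LessThan)
  also have "\<dots> = (\<Sum>p\<in>?perms. \<Sum>\<phi>\<in>{..<k} \<rightarrow>\<^sub>E I.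
      (\<Prod>l<k. w (\<phi> l) l) * (signof p * (\<Prod>l<k. u (\<phi> l) (p l))))"
    by (simp add: prod_sum_PiE assms prod.distrib sum_distrib_left ac_simps)
  also have "\<dots> = (\<Sum>\<phi>\<in>{..<k} \<rightarrow>\<^sub>E I. (\<Prod>l<k. w (\<phi> l) l) * det (?U \<phi>))"
    by (subst sum.swap) (simp add: det_def'[of _ k] atLeast0LessThan sum_distrib_left)
  also have "\<dots> = (\<Sum>\<phi>\<in>injections k I. (\<Prod>l<k. w (\<phi> l) l) * det (?U \<phi>))"
  proof (rule sum.mono_neutral_right)
    show "finite ({..<k} \<rightarrow>\<^sub>E I)" using assms by (simp add: finite_PiE)
    show "injections k I \<subseteq> {..<k} \<rightarrow>\<^sub>E I" unfolding injections_def by auto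
    show "\<forall>\<phi>\<in>({..<k} \<rightarrow>\<^sub>E I) - injections k I. (\<Prod>l<k. w (\<phi> l) l) * det (?U \<phi>) = 0"
    proof
      fix \<phi> assume "\<phi> \<in> ({..<k} \<rightarrow>\<^sub>E I) - injections k I"
      then obtain l l' where "l < k" "l' < k" "l \<noteq> l'" "\<phi> l = \<phi> l'"
        unfolding injections_def inj_on_def by auto
      then have "det (?U \<phi>) = 0"
        by (intro det_identical_rows[of _ k l l']) (auto intro!: eq_vecI)
      then show "(\<Prod>l<k. w (\<phi> l) l) * det (?U \<phi>) = 0" by simp
    qed
  qed
  finally show ?thesis
    by (simp add: det_U mult.commute)
qed

lemma vandermonde_carrier [simp]: "vandermonde k x \<in> carrier_mat k k"
  unfolding vandermonde_def by simp

lemma det_vandermonde_nonzero: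
  fixes x :: "nat \<Rightarrow> 'a::field"
  assumes inj: "inj_on x {..<k}"
  shows "det (vandermonde k x) \<noteq> 0"
proof
  assume "det (vandermonde k x) = 0"
  then have "det (transpose_mat (vandermonde k x)) = 0"
    by (simp add: det_transpose[of _ k])
  then obtain v where v: "v \<in> carrier_vec k" "v \<noteq> 0\<^sub>v k"
    and kernel: "transpose_mat (vandermonde k x) *\<^sub>v v = 0\<^sub>v k"
    using det_0_iff_vec_prod_zero_field[of "transpose_mat (vandermonde k x)" k] by auto
  define p where "p = (\<Sum>i<k. monom (v $ i) (k - 1 - i))"
  have "poly p (x l) = 0" if "l < k" for l
  proof -
    have "poly p (x l) = (transpose_mat (vandermonde k x) *\<^sub>v v) $ l"
      using that v unfolding p_def vandermonde_def
      by (auto simp: poly_sum poly_monom scalar_prod_def atLeast0LessThan mult.commute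
          intro!: sum.cong)
    with kernel that show ?thesis by simp
  qed
  moreover have "degree p < k"
  proof -
    from v have "k > 0" by (cases k) auto
    moreover have "degree p \<le> k - 1"
      unfolding p_def by (rule degree_sum_le) (auto intro: order_trans[OF degree_monom_le])
    ultimately show ?thesis by linarith
  qed
  moreover have "card (x ` {..<k}) = k"
    using card_image[OF inj] by simp
  ultimately have "p = 0"
    by (intro poly_eqI_degree[of "x ` {..<k}"]) auto
  have "v $ i = 0" if "i < k" for i
  proof -
    have "coeff p (k - 1 - i) = (\<Sum>j<k. if j = i then v $ j else 0)"
      unfolding p_def coeff_sum coeff_monom using that by (intro sum.cong) auto
    with \<open>p = 0\<close> that show ?thesis by simp
  qed
  with v show False by (auto intro: eq_vecI)
qed

lemma vandermonde_eq_lagrange: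
  assumes "finite S" and "card S = k"
  shows "mat k k (\<lambda>(i, l). \<Sum>a\<in>S. a ^ (k - 1 - i) * lagrange_basis S a (x l)) = vandermonde k x"
proof (rule eq_matI)
  fix i l assume "i < dim_row (vandermonde k x)" and "l < dim_col (vandermonde k x)"
  then have "i < k" "l < k" by (auto simp: vandermonde_def)
  have "degree (monom (1::'a) (k - 1 - i)) < card S"
    using assms \<open>i < k\<close> by (simp add: degree_monom_eq)
  from poly_lagrange_interpolation[OF assms(1) this, of "x l"]
  have "(\<Sum>a\<in>S. a ^ (k - 1 - i) * lagrange_basis S a (x l)) = x l ^ (k - 1 - i)"
    by (simp add: poly_monom)
  with \<open>i < k\<close> \<open>l < k\<close> show "mat k k (\<lambda>(i, l). \<Sum>a\<in>S. a ^ (k - 1 - i) * lagrange_basis S a (x l)) $$ (i, l)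
      = vandermonde k x $$ (i, l)"
    by (simp add: vandermonde_def poly_monom)
qed (auto simp: vandermonde_def)

lemma sum_injections_lagrange_subset:
  fixes B :: "'a::field set" and c x :: "_ \<Rightarrow> 'a"
  assumes B: "finite B" and S: "S \<subseteq> B" "card S = k"
  shows "(\<Sum>\<phi>\<in>injections k S. det (mat k k (\<lambda>(i, l). \<phi> l ^ (k - 1 - i)))
            * (\<Prod>l<k. c (\<phi> l) * lagrange_basis B (\<phi> l) (x l)))
    = det (vandermonde k x) * ((\<Prod>\<beta>\<in>S. c \<beta>) * (\<Prod>l<k. \<Prod>b\<in>B - S. x l - b)
        / (\<Prod>\<beta>\<in>S. \<Prod>b\<in>B - S. \<beta> - b))"
proof -
  let ?D = "\<lambda>\<phi>. det (mat k k (\<lambda>(i, l). \<phi> l ^ (k - 1 - i)))"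
  let ?C = "(\<Prod>\<beta>\<in>S. c \<beta>) * (\<Prod>l<k. \<Prod>b\<in>B - S. x l - b) / (\<Prod>\<beta>\<in>S. \<Prod>b\<in>B - S. \<beta> - b)"
  have fin: "finite S" using B S finite_subset by blast
  have "?D \<phi> * (\<Prod>l<k. c (\<phi> l) * lagrange_basis B (\<phi> l) (x l))
      = ?C * (?D \<phi> * (\<Prod>l<k. lagrange_basis S (\<phi> l) (x l)))"
    if "\<phi> \<in> injections k S" for \<phi>
  proof -
    have bij: "bij_betw \<phi> {..<k} S" by (rule injections_bij_betw[OF that fin S(2)])
    then have "\<phi> l \<in> S" if "l < k" for l
      using that by (auto dest: bij_betwE)
    then have "(\<Prod>l<k. c (\<phi> l) * lagrange_basis B (\<phi> l) (x l))
        = (\<Prod>l<k. c (\<phi> l) * ((\<Prod>b\<in>B - S. x l - b) / (\<Prod>b\<in>B - S. \<phi> l - b)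
            * lagrange_basis S (\<phi> l) (x l)))"
      by (intro prod.cong) (simp_all add: lagrange_basis_subset[OF B S(1)])
    also have "\<dots> = (\<Prod>l<k. c (\<phi> l)) * (\<Prod>l<k. \<Prod>b\<in>B - S. x l - b)
        / (\<Prod>l<k. \<Prod>b\<in>B - S. \<phi> l - b) * (\<Prod>l<k. lagrange_basis S (\<phi> l) (x l))"
      by (simp add: prod.distrib prod_dividef)
    also have "\<dots> = ?C * (\<Prod>l<k. lagrange_basis S (\<phi> l) (x l))"
      using prod.reindex_bij_betw[OF bij, of c] prod.reindex_bij_betw[OF bij, of "\<lambda>\<beta>. \<Prod>b\<in>B - S. \<beta> - b"]
      by simp
    finally show ?thesis by simp
  qed
  then have "(\<Sum>\<phi>\<in>injections k S. ?D \<phi> * (\<Prod>l<k. c (\<phi> l) * lagrange_basis B (\<phi> l) (x l)))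
      = ?C * (\<Sum>\<phi>\<in>injections k S. ?D \<phi> * (\<Prod>l<k. lagrange_basis S (\<phi> l) (x l)))"
    by (simp add: sum_distrib_left)
  also have "(\<Sum>\<phi>\<in>injections k S. ?D \<phi> * (\<Prod>l<k. lagrange_basis S (\<phi> l) (x l)))
      = det (mat k k (\<lambda>(i, l). \<Sum>a\<in>S. a ^ (k - 1 - i) * lagrange_basis S a (x l)))"
    by (rule cauchy_binet_injections[OF fin, symmetric])
  also have "\<dots> = det (vandermonde k x)"
    by (simp only: vandermonde_eq_lagrange[OF fin S(2)])
  finally show ?thesis by simp
qed

lemma det_lagrange_expansion:
  fixes B :: "'a::field set" and c x :: "_ \<Rightarrow> 'a"
  assumes B: "finite B"
  shows "det (mat k k (\<lambda>(i, l). \<Sum>\<beta>\<in>B. \<beta> ^ (k - 1 - i) * (c \<beta> * lagrange_basis B \<beta> (x l)))) =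
    det (vandermonde k x) * (\<Sum>S | S \<subseteq> B \<and> card S = k.
      (\<Prod>\<beta>\<in>S. c \<beta>) * (\<Prod>l<k. \<Prod>b\<in>B - S. x l - b) / (\<Prod>\<beta>\<in>S. \<Prod>b\<in>B - S. \<beta> - b))"
proof -
  let ?h = "\<lambda>\<phi>. det (mat k k (\<lambda>(i, l). \<phi> l ^ (k - 1 - i)))
      * (\<Prod>l<k. c (\<phi> l) * lagrange_basis B (\<phi> l) (x l))"
  let ?T = "{S. S \<subseteq> B \<and> card S = k}"
  have "det (mat k k (\<lambda>(i, l). \<Sum>\<beta>\<in>B. \<beta> ^ (k - 1 - i) * (c \<beta> * lagrange_basis B \<beta> (x l))))
      = sum ?h (injections k B)"
    by (rule cauchy_binet_injections[OF B])
  also have "\<dots> = (\<Sum>S\<in>?T. sum ?h {\<phi> \<in> injections k B. \<phi> ` {..<k} = S})"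
  proof (rule sum.group[symmetric])
    show "finite (injections k B)" by (rule finite_injections[OF B])
    show "finite ?T" using B by (simp add: finite_subset)
    show "(\<lambda>\<phi>. \<phi> ` {..<k}) ` injections k B \<subseteq> ?T"
    proof (rule image_subsetI)
      fix \<phi> assume "\<phi> \<in> injections k B"
      then have "\<phi> ` {..<k} \<subseteq> B" and "inj_on \<phi> {..<k}"
        unfolding injections_def by auto
      then show "\<phi> ` {..<k} \<in> ?T" by (simp add: card_image)
    qed
  qed
  also have "\<dots> = (\<Sum>S\<in>?T. det (vandermonde k x) * ((\<Prod>\<beta>\<in>S. c \<beta>)
      * (\<Prod>l<k. \<Prod>b\<in>B - S. x l - b) / (\<Prod>\<beta>\<in>S. \<Prod>b\<in>B - S. \<beta> - b)))"
  proof (rule sum.cong[OF refl])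
    fix S assume "S \<in> ?T"
    then have S: "S \<subseteq> B" "card S = k" by auto
    then show "sum ?h {\<phi> \<in> injections k B. \<phi> ` {..<k} = S} = det (vandermonde k x) * ((\<Prod>\<beta>\<in>S. c \<beta>)
        * (\<Prod>l<k. \<Prod>b\<in>B - S. x l - b) / (\<Prod>\<beta>\<in>S. \<Prod>b\<in>B - S. \<beta> - b))"
      using injections_with_image[OF S(1) finite_subset[OF S(1) B] S(2)]
        sum_injections_lagrange_subset[OF B S] by simp
  qed
  finally show ?thesis by (simp add: sum_distrib_left)
qed

lemma degree_root_poly: "finite A \<Longrightarrow> degree (root_poly A :: 'a::idom poly) = card A"
  unfolding root_poly_def by (simp add: degree_prod_sum_eq)

lemma lead_coeff_root_poly: "lead_coeff (root_poly A :: 'a::idom poly) = 1"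
  unfolding root_poly_def by (simp add: lead_coeff_prod)

lemma poly_root_poly_eq_0: "finite A \<Longrightarrow> a \<in> A \<Longrightarrow> poly (root_poly A) a = 0"
  unfolding root_poly_def poly_prod by (rule prod_zero) auto

lemma poly_mod_root_poly:
  fixes p :: "'a::field poly"
  assumes B: "finite B"
  shows "poly (p mod root_poly B) t = (\<Sum>\<beta>\<in>B. poly p \<beta> * lagrange_basis B \<beta> t)"
proof (cases "B = {}")
  case True
  then show ?thesis by (simp add: root_poly_def)
next
  case False
  have "root_poly B \<noteq> 0"
    using lead_coeff_root_poly[of B] by auto
  then have "degree (p mod root_poly B) < card B"
    using degree_mod_less[of "root_poly B" p] degree_root_poly[OF B] False B
    by (auto simp: card_gt_0_iff)
  then have "poly (p mod root_poly B) t = (\<Sum>\<beta>\<in>B. poly (p mod root_poly B) \<beta> * lagrange_basis B \<beta> t)"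
    by (rule poly_lagrange_interpolation[OF B])
  also have "\<dots> = (\<Sum>\<beta>\<in>B. poly p \<beta> * lagrange_basis B \<beta> t)"
    by (intro sum.cong) (simp_all add: poly_mod poly_root_poly_eq_0[OF B])
  finally show ?thesis .
qed

lemma coeff_div_eq_0:
  fixes p g :: "'a::field poly"
  assumes "degree p < r + degree g" and "r \<le> t"
  shows "coeff (p div g) t = 0"
proof (cases "p div g = 0")
  case False
  then have "g \<noteq> 0" by auto
  have "degree (p mod g) < r + degree g"
    using degree_mod_less[OF \<open>g \<noteq> 0\<close>, of p] assms(1) by auto
  then have "degree (p - p mod g) < r + degree g"
    using assms(1) degree_diff_le_max[of p "p mod g"] by linarith
  then have "degree (p div g) + degree g < r + degree g"
    by (simp add: minus_mod_eq_div_mult degree_mult_eq[OF False \<open>g \<noteq> 0\<close>])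
  with assms(2) show ?thesis by (simp add: coeff_eq_0)
qed simp

lemma poly_eq_sum_monom_lessThan:
  assumes "\<And>t. r \<le> t \<Longrightarrow> coeff q t = 0"
  shows "q = (\<Sum>s<r. monom (coeff q s) s)"
proof (rule poly_eqI)
  fix t
  show "coeff q t = coeff (\<Sum>s<r. monom (coeff q s) s) t"
    using assms[of t] by (cases "t < r") (simp_all add: coeff_sum coeff_monom)
qed

definition mixed_row :: "nat \<Rightarrow> nat \<Rightarrow> (nat \<Rightarrow> 'a::comm_semiring_0) \<Rightarrow> 'a poly \<Rightarrow> nat \<Rightarrow> 'a" where
  "mixed_row r e x p c = (if c < r then coeff p (e - c) else poly p (x (c - r)))"

lemma mixed_row_add [simp]: "mixed_row r e x (p + q) c = mixed_row r e x p c + mixed_row r e x q c"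
  by (simp add: mixed_row_def)

lemma mixed_row_smult [simp]: "mixed_row r e x (smult a p) c = a * mixed_row r e x p c"
  by (simp add: mixed_row_def)

lemma mixed_row_sum [simp]: "mixed_row r e x (\<Sum>j\<in>J. p j) c = (\<Sum>j\<in>J. mixed_row r e x (p j) c)"
  by (simp add: mixed_row_def coeff_sum poly_sum)

lemma mixed_row_div_mod:
  fixes p g :: "'a::field poly"
  assumes g: "g \<noteq> 0" "degree g = n" and p: "degree p < r + n"
  shows "mixed_row r (r + n - 1) x p c =
    (\<Sum>j<r. coeff (p div g) (r - 1 - j) * mixed_row r (r + n - 1) x (monom 1 (r - 1 - j) * g) c)
    + (if r \<le> c then poly (p mod g) (x (c - r)) else 0)"
proof -
  define a where "a j = coeff (p div g) (r - 1 - j)" for j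
  have "p div g = (\<Sum>s<r. monom (coeff (p div g) s) s)"
    by (rule poly_eq_sum_monom_lessThan) (use coeff_div_eq_0 p g in auto)
  also have "\<dots> = (\<Sum>j<r. smult (a j) (monom 1 (r - 1 - j)))"
    unfolding a_def by (subst sum.nat_diff_reindex[symmetric]) (simp add: smult_monom)
  finally have q: "p div g = (\<Sum>j<r. smult (a j) (monom 1 (r - 1 - j)))" .
  have "p = p div g * g + p mod g" by simp
  also have "\<dots> = (\<Sum>j<r. smult (a j) (monom 1 (r - 1 - j) * g)) + p mod g"
    by (simp only: q sum_distrib_right mult_smult_left)
  finally have "mixed_row r (r + n - 1) x p c =
      mixed_row r (r + n - 1) x ((\<Sum>j<r. smult (a j) (monom 1 (r - 1 - j) * g)) + p mod g) c"
    by (rule arg_cong)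
  then have "mixed_row r (r + n - 1) x p c =
      (\<Sum>j<r. a j * mixed_row r (r + n - 1) x (monom 1 (r - 1 - j) * g) c)
      + mixed_row r (r + n - 1) x (p mod g) c"
    by simp
  moreover have "coeff (p mod g) (r + n - 1 - c) = 0" if "c < r"
    using degree_mod_less[OF g(1), of p] g(2) that by (auto intro: coeff_eq_0)
  ultimately show ?thesis by (simp add: mixed_row_def a_def)
qed

lemma det_mixed_row_unitriangular:
  fixes g :: "'a::field poly"
  assumes g: "lead_coeff g = 1" "degree g = n"
  shows "det (mat (k + r) (k + r) (\<lambda>(j, c). if j < r
      then mixed_row r (r + n - 1) x (monom 1 (r - 1 - j) * g) c else of_bool (j = c))) = 1"
    (is "det ?T = 1")
proof -
  have "?T $$ (j, c) = 0" if "c < j" "j < k + r" for j c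
  proof (cases "j < r")
    case True
    with that have "r + n - 1 - c - (r - 1 - j) > degree g" using g(2) by linarith
    with True that show ?thesis by (auto simp: mixed_row_def coeff_monom_mult coeff_eq_0)
  qed (use that in simp)
  then have "det ?T = prod_list (diag_mat ?T)"
    by (intro det_upper_triangular[of _ "k + r"]) auto
  also have "\<dots> = 1"
  proof (unfold prod_list_diag_prod, intro prod.neutral ballI)
    fix j assume "j \<in> {0..<dim_row ?T}"
    moreover have "r + n - 1 - j - (r - 1 - j) = degree g" if "j < r"
      using that g(2) by linarith
    ultimately show "?T $$ (j, j) = 1"
      using g(1) by (auto simp: mixed_row_def coeff_monom_mult)
  qed
  finally show ?thesis .
qed

lemma mixed_row_mat_div_mod_factor:
  fixes g :: "'a::field poly" and P :: "nat \<Rightarrow> 'a poly"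
  assumes g: "g \<noteq> 0" "degree g = n" and deg: "\<And>i. i < N \<Longrightarrow> degree (P i) < r + n"
    and "r \<le> N"
  shows "mat N N (\<lambda>(i, c). mixed_row r (r + n - 1) x (P i) c) =
    mat N N (\<lambda>(i, j). if j < r then coeff (P i div g) (r - 1 - j) else poly (P i mod g) (x (j - r)))
    * mat N N (\<lambda>(j, c). if j < r
        then mixed_row r (r + n - 1) x (monom 1 (r - 1 - j) * g) c else of_bool (j = c))"
    (is "_ = ?Q * ?T")
proof (rule eq_matI)
  fix i c assume "i < dim_row (?Q * ?T)" and "c < dim_col (?Q * ?T)"
  then have i: "i < N" and c: "c < N" by simp_all
  have "(?Q * ?T) $$ (i, c) = (\<Sum>j\<in>{0..<N}. ?Q $$ (i, j) * ?T $$ (j, c))"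
    using i c by (simp add: scalar_prod_def)
  also have "\<dots> = (\<Sum>j\<in>{0..<r}. ?Q $$ (i, j) * ?T $$ (j, c))
      + (\<Sum>j\<in>{r..<N}. ?Q $$ (i, j) * ?T $$ (j, c))"
    by (rule sum.atLeastLessThan_concat[symmetric]) (use \<open>r \<le> N\<close> in auto)
  also have "(\<Sum>j\<in>{0..<r}. ?Q $$ (i, j) * ?T $$ (j, c)) =
      (\<Sum>j<r. coeff (P i div g) (r - 1 - j) * mixed_row r (r + n - 1) x (monom 1 (r - 1 - j) * g) c)"
    using i c \<open>r \<le> N\<close> by (auto simp: atLeast0LessThan intro!: sum.cong)
  also have "(\<Sum>j\<in>{r..<N}. ?Q $$ (i, j) * ?T $$ (j, c)) =
      (\<Sum>j\<in>{r..<N}. if j = c then poly (P i mod g) (x (c - r)) else 0)"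
    using i c by (auto intro!: sum.cong)
  also have "\<dots> = (if r \<le> c then poly (P i mod g) (x (c - r)) else 0)"
    using c by simp
  finally show "mat N N (\<lambda>(i, c). mixed_row r (r + n - 1) x (P i) c) $$ (i, c) = (?Q * ?T) $$ (i, c)"
    using i c mixed_row_div_mod[OF g deg[OF i]] by simp
qed auto

lemma det_div_mod_mat:
  fixes g :: "'a::field poly" and P :: "nat \<Rightarrow> 'a poly"
  assumes "g \<noteq> 0" and g_rows: "\<And>j. j < r \<Longrightarrow> P (k + j) = monom 1 (r - 1 - j) * g"
  shows "det (mat (k + r) (k + r) (\<lambda>(i, j). if j < r
      then coeff (P i div g) (r - 1 - j) else poly (P i mod g) (x (j - r)))) =
    (-1) ^ (k * r) * det (mat k k (\<lambda>(i, l). poly (P i mod g) (x l)))"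
    (is "det ?Q = _")
proof -
  have div: "P (k + j) div g = monom 1 (r - 1 - j)" and modz: "P (k + j) mod g = 0" if "j < r" for j
    using g_rows[OF that] \<open>g \<noteq> 0\<close> by simp_all
  have "mat (k + r) (k + r) (\<lambda>(i, j). ?Q $$ (i, if j < k then j + r else j - k)) =
      four_block_mat (mat k k (\<lambda>(i, l). poly (P i mod g) (x l)))
        (mat k r (\<lambda>(i, j). coeff (P i div g) (r - 1 - j))) (0\<^sub>m r k) (1\<^sub>m r)"
  proof (rule eq_matI)
    fix i j assume "i < dim_row (four_block_mat (mat k k (\<lambda>(i, l). poly (P i mod g) (x l)))
        (mat k r (\<lambda>(i, j). coeff (P i div g) (r - 1 - j))) (0\<^sub>m r k) (1\<^sub>m r))"
      and "j < dim_col (four_block_mat (mat k k (\<lambda>(i, l). poly (P i mod g) (x l)))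
        (mat k r (\<lambda>(i, j). coeff (P i div g) (r - 1 - j))) (0\<^sub>m r k) (1\<^sub>m r))"
    then have "i < k + r" "j < k + r" by auto
    then show "mat (k + r) (k + r) (\<lambda>(i, j). ?Q $$ (i, if j < k then j + r else j - k)) $$ (i, j) =
      four_block_mat (mat k k (\<lambda>(i, l). poly (P i mod g) (x l)))
        (mat k r (\<lambda>(i, j). coeff (P i div g) (r - 1 - j))) (0\<^sub>m r k) (1\<^sub>m r) $$ (i, j)"
      using div[of "i - k"] modz[of "i - k"]
      by (cases "i < k") (auto simp: coeff_monom)
  qed auto
  moreover have "det (four_block_mat (mat k k (\<lambda>(i, l). poly (P i mod g) (x l)))
        (mat k r (\<lambda>(i, j). coeff (P i div g) (r - 1 - j))) (0\<^sub>m r k) (1\<^sub>m r)) =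
      det (mat k k (\<lambda>(i, l). poly (P i mod g) (x l))) * det (1\<^sub>m r)"
    by (rule det_four_block_mat_lower_left_zero) auto
  ultimately show ?thesis
    using det_swap_cols[of ?Q k r] by simp
qed

lemma det_mixed_row_mat_reduce:
  fixes g :: "'a::field poly" and P :: "nat \<Rightarrow> 'a poly"
  assumes g: "lead_coeff g = 1" "degree g = n"
    and deg: "\<And>i. i < k \<Longrightarrow> degree (P i) < r + n"
    and g_rows: "\<And>j. j < r \<Longrightarrow> P (k + j) = monom 1 (r - 1 - j) * g"
  shows "det (mat (k + r) (k + r) (\<lambda>(i, c). mixed_row r (r + n - 1) x (P i) c)) =
    (-1) ^ (k * r) * det (mat k k (\<lambda>(i, l). poly (P i mod g) (x l)))"
proof -
  have "g \<noteq> 0" using g(1) by auto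
  have deg_all: "degree (P i) < r + n" if "i < k + r" for i
  proof (cases "i < k")
    case False
    with that have "P i = monom 1 (r - 1 - (i - k)) * g" using g_rows[of "i - k"] by simp
    with False that g(2) \<open>g \<noteq> 0\<close> show ?thesis by (simp add: degree_mult_eq degree_monom_eq)
  qed (rule deg)
  have "mat (k + r) (k + r) (\<lambda>(i, c). mixed_row r (r + n - 1) x (P i) c) =
    mat (k + r) (k + r) (\<lambda>(i, j). if j < r
      then coeff (P i div g) (r - 1 - j) else poly (P i mod g) (x (j - r)))
    * mat (k + r) (k + r) (\<lambda>(j, c). if j < r
        then mixed_row r (r + n - 1) x (monom 1 (r - 1 - j) * g) c else of_bool (j = c))"
    by (rule mixed_row_mat_div_mod_factor[OF \<open>g \<noteq> 0\<close> g(2)]) (simp_all add: deg_all)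
  then show ?thesis
    by (simp add: det_mult[of _ "k + r"] det_mixed_row_unitriangular[OF g]
        det_div_mod_mat[OF \<open>g \<noteq> 0\<close> g_rows])
qed

lemma MSyl_matrix_altdef:
  assumes "card A = m" and "card B = n" and "d \<le> m" and "d \<le> n"
  shows "MSyl_matrix A B d x = mat ((n - d) + (m - d)) ((n - d) + (m - d)) (\<lambda>(i, c).
    mixed_row (m - d) ((m - d) + n - 1) x
      (if i < n - d then monom 1 (n - d - 1 - i) * root_poly A
       else monom 1 (m - d - 1 - (i - (n - d))) * root_poly B) c)"
proof -
  have "m + n - 2 * d = (n - d) + (m - d)" and "m + n - d - Suc c = (m - d) + n - 1 - c" for c
    using assms(3,4) by linarith+
  then show ?thesis
    using assms(1,2) unfolding MSyl_matrix_def Let_def mixed_row_def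
    by (intro eq_matI) (auto simp: poly_monom)
qed

lemma MSyl0_eq_sum_subsets:
  assumes B: "finite B" "card B = n" and "d \<le> n" and x: "inj_on x {..<n - d}"
  shows "MSyl0 A B d x = (-1) ^ ((card A - d) * (n - d)) *
    (\<Sum>S | S \<subseteq> B \<and> card S = n - d. (\<Prod>\<beta>\<in>S. poly (root_poly A) \<beta>)
      * (\<Prod>l<n - d. \<Prod>b\<in>B - S. x l - b) / (\<Prod>\<beta>\<in>S. \<Prod>b\<in>B - S. \<beta> - b))"
proof -
  have "bij_betw (\<lambda>S. B - S) {S. S \<subseteq> B \<and> card S = n - d} {B'. B' \<subseteq> B \<and> card B' = d}"
    by (rule bij_betwI[where g = "\<lambda>B'. B - B'"])
      (use B \<open>d \<le> n\<close> in \<open>auto simp: card_Diff_subset finite_subset\<close>)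
  then have "(\<Sum>B' | B' \<subseteq> B \<and> card B' = d. F B') = (\<Sum>S | S \<subseteq> B \<and> card S = n - d. F (B - S))"
    for F :: "'a set \<Rightarrow> 'a"
    by (rule sum.reindex_bij_betw[symmetric])
  moreover have "Res (x ` {..<n - d}) C = (\<Prod>l<n - d. \<Prod>b\<in>C. x l - b)" for C
    unfolding Res_def using x by (simp add: prod.reindex)
  moreover have "B - (B - S) = S" if "S \<subseteq> B" for S
    using that by auto
  ultimately show ?thesis
    unfolding MSyl0_def Let_def B(2) by (auto simp: Res_def intro!: sum.cong)
qed

lemma det_MSyl_matrix:
  fixes A B :: "'a::field set"
  assumes A: "finite A" "card A = m" and B: "finite B" "card B = n" and "d \<le> m" "d \<le> n"
  shows "det (MSyl_matrix A B d x) = (-1) ^ ((n - d) * (m - d)) * det (mat (n - d) (n - d)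
    (\<lambda>(i, l). poly (monom 1 (n - d - 1 - i) * root_poly A mod root_poly B) (x l)))"
proof -
  define k r where "k = n - d" and "r = m - d"
  define f g where "f = root_poly A" and "g = root_poly B"
  define P where "P i = (if i < k then monom 1 (k - 1 - i) * f else monom 1 (r - 1 - (i - k)) * g)"
    for i
  have "det (MSyl_matrix A B d x) = det (mat (k + r) (k + r) (\<lambda>(i, c). mixed_row r (r + n - 1) x (P i) c))"
    unfolding MSyl_matrix_altdef[OF A(2) B(2) assms(5,6)] P_def k_def r_def f_def g_def ..
  also have "\<dots> = (-1) ^ (k * r) * det (mat k k (\<lambda>(i, l). poly (P i mod g) (x l)))"
  proof (rule det_mixed_row_mat_reduce)
    show "lead_coeff g = 1" and "degree g = n"
      using lead_coeff_root_poly[of B] degree_root_poly[OF B(1)] B(2) by (simp_all add: g_def)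
    show "degree (P i) < r + n" if "i < k" for i
    proof -
      have "degree (P i) \<le> degree (monom (1::'a) (k - 1 - i)) + degree f"
        using that by (simp add: P_def degree_mult_le)
      also have "\<dots> = k - 1 - i + m"
        using degree_root_poly[OF A(1)] A(2) by (simp add: f_def degree_monom_eq)
      also have "\<dots> < r + n"
        using that \<open>d \<le> m\<close> unfolding k_def r_def by linarith
      finally show ?thesis .
    qed
    show "P (k + j) = monom 1 (r - 1 - j) * g" if "j < r" for j
      by (simp add: P_def)
  qed
  also have "mat k k (\<lambda>(i, l). poly (P i mod g) (x l)) =
      mat k k (\<lambda>(i, l). poly (monom 1 (k - 1 - i) * f mod g) (x l))"
    by (intro eq_matI) (simp_all add: P_def)
  finally show ?thesis unfolding k_def r_def f_def g_def .
qed

theorem proposition2p8: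
  fixes A B :: "'a::field set" and m n d :: nat and x :: "nat \<Rightarrow> 'a"
  assumes "finite A" and "finite B" and "card A = m" and "card B = n"
    and "d \<le> n - 1" and "d \<le> m" and "n \<ge> 1"
    and "inj_on x {..<n-d}"
  shows "MSyl0 A B d x = det (MSyl_matrix A B d x) / det (vandermonde (n - d) x)"
proof -
  let ?k = "n - d" and ?f = "root_poly A"
  have "d \<le> n" using assms(5) by linarith
  have "det (MSyl_matrix A B d x) = (-1) ^ (?k * (m - d)) *
      det (mat ?k ?k (\<lambda>(i, l). poly (monom 1 (?k - 1 - i) * ?f mod root_poly B) (x l)))"
    by (rule det_MSyl_matrix) (use assms \<open>d \<le> n\<close> in auto)
  also have "mat ?k ?k (\<lambda>(i, l). poly (monom 1 (?k - 1 - i) * ?f mod root_poly B) (x l)) =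
      mat ?k ?k (\<lambda>(i, l). \<Sum>\<beta>\<in>B. \<beta> ^ (?k - 1 - i) * (poly ?f \<beta> * lagrange_basis B \<beta> (x l)))"
    by (auto simp: poly_mod_root_poly[OF assms(2)] poly_monom mult.assoc intro!: eq_matI)
  also have "det \<dots> = det (vandermonde ?k x) * (\<Sum>S | S \<subseteq> B \<and> card S = ?k. (\<Prod>\<beta>\<in>S. poly ?f \<beta>)
      * (\<Prod>l<?k. \<Prod>b\<in>B - S. x l - b) / (\<Prod>\<beta>\<in>S. \<Prod>b\<in>B - S. \<beta> - b))"
    by (rule det_lagrange_expansion[OF assms(2)])
  finally show ?thesis
    using MSyl0_eq_sum_subsets[OF assms(2,4) \<open>d \<le> n\<close> assms(8), of A] det_vandermonde_nonzero[OF assms(8)]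
      assms(3) by (simp add: mult.commute)
qed

end
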